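(* If $H$ is a triangle-free simple graph and $k \geq 1$, then $\tau(I_k \vee H) \leq 2\nu(I_k \vee H)$.
   Context: $I_k$ is an independent set of $k$ vertices; the join $G_1\vee G_2$ is obtained from the disjoint union of $G_1,G_2$ by adding all edges between $V(G_1)$ and $V(G_2)$. $\tau(G)$ is the minimum size of an edge set $X$ with $G-X$ triangle-free; $\nu(G)$ is the maximum number of pairwise edge-disjoint triangles in $G$. *)

theory Defs
  imports Main
begin

definition simple_graph :: "'a set \<Rightarrow> 'a set set \<Rightarrow> bool" where
  "simple_graph V E \<longleftrightarrow> finite V \<and> (\<forall>e\<in>E. \<exists>u v. e = {u, v} \<and> u \<noteq> v \<and> u \<in> V \<and> v \<in> V)"

definition tri_edges :: "'a set \<Rightarrow> 'a set set" where
  "tri_edges t = {e. e \<subseteq> t \<and> card e = 2}"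

definition triangles :: "'a set set \<Rightarrow> 'a set set" where
  "triangles E = {t. finite t \<and> card t = 3 \<and> tri_edges t \<subseteq> E}"

definition triangle_free :: "'a set set \<Rightarrow> bool" where
  "triangle_free E \<longleftrightarrow> triangles E = {}"

definition tau :: "'a set set \<Rightarrow> nat" where
  "tau E = (LEAST n. \<exists>X. X \<subseteq> E \<and> card X = n \<and> triangle_free (E - X))"

definition edge_disjoint_triangles :: "'a set set \<Rightarrow> 'a set set \<Rightarrow> bool" where
  "edge_disjoint_triangles E T \<longleftrightarrow> T \<subseteq> triangles E \<and>
     (\<forall>s\<in>T. \<forall>t\<in>T. s \<noteq> t \<longrightarrow> tri_edges s \<inter> tri_edges t = {})"

definition nu :: "'a set set \<Rightarrow> nat" where
  "nu E = Max {card T | T. edge_disjoint_triangles E T}"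

definition join_vertices :: "'a set \<Rightarrow> 'b set \<Rightarrow> ('a + 'b) set" where
  "join_vertices V1 V2 = Inl ` V1 \<union> Inr ` V2"

definition join_edges :: "'a set \<Rightarrow> 'a set set \<Rightarrow> 'b set \<Rightarrow> 'b set set \<Rightarrow> ('a + 'b) set set" where
  "join_edges V1 E1 V2 E2 =
     (image Inl) ` E1 \<union> (image Inr) ` E2 \<union> {{Inl u, Inr v} | u v. u \<in> V1 \<and> v \<in> V2}"

text \<open>The independent set I_k on vertices {0..<k}, with no edges.\<close>
definition indep_vertices :: "nat \<Rightarrow> nat set" where
  "indep_vertices k = {0..<k}"

end

theory Submission
  imports Defs "HOL-Combinatorics.Transposition"
begin

text \<open>Let \<open>F\<close> be a largest subgraph of \<open>H\<close> with a proper edge colouring \<open>c\<close> by the \<open>k\<close>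
  vertices of \<open>I\<^sub>k\<close>. Each edge \<open>e\<close> of \<open>F\<close> spans a triangle with the vertex \<open>c e\<close>, and these
  triangles are edge-disjoint, so \<open>\<nu> \<ge> |F|\<close>. Let \<open>S\<close> be the set of vertices at which all \<open>k\<close>
  colours appear. Every triangle of \<open>I\<^sub>k \<or> H\<close> consists of a vertex of \<open>I\<^sub>k\<close> and an edge of \<open>H\<close>,
  so deleting the \<open>k |S|\<close> edges between \<open>I\<^sub>k\<close> and \<open>S\<close> together with the edges of \<open>H - S\<close>
  leaves no triangle. Finally \<open>k |S| + |E(H - S)| \<le> 2 |F|\<close> by counting \<open>F\<close>-degrees: a vertex of
  \<open>S\<close> has \<open>F\<close>-degree at least \<open>k\<close>, and at an unsaturated vertex the uncoloured edges of
  \<open>H - S\<close> inject into the colours present there, by maximality of \<open>F\<close> and a Kempe chain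
  argument.\<close>

section \<open>Simple graphs\<close>

lemma simple_graph_edgeE:
  assumes "simple_graph V E" "e \<in> E"
  obtains x y where "e = {x, y}" "x \<noteq> y" "x \<in> V" "y \<in> V"
  using assms unfolding simple_graph_def by blast

lemma simple_graph_edge_subset: "simple_graph V E \<Longrightarrow> e \<in> E \<Longrightarrow> e \<subseteq> V"
  by (erule simple_graph_edgeE) auto

lemma simple_graph_card_edge: "simple_graph V E \<Longrightarrow> e \<in> E \<Longrightarrow> card e = 2"
  by (erule simple_graph_edgeE) auto

lemma simple_graph_finite_vertices: "simple_graph V E \<Longrightarrow> finite V"
  unfolding simple_graph_def by blast

lemma simple_graph_finite_edges:
  assumes "simple_graph V E" shows "finite E"
proof (rule finite_subset)
  show "E \<subseteq> Pow V" using simple_graph_edge_subset[OF assms] by blast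
  show "finite (Pow V)" using simple_graph_finite_vertices[OF assms] by simp
qed

lemma handshake:
  assumes "finite W" "finite A" "\<And>e. e \<in> A \<Longrightarrow> e \<subseteq> W \<and> card e = 2"
  shows "(\<Sum>w\<in>W. card {e\<in>A. w \<in> e}) = 2 * card A"
proof -
  have "(\<Sum>w\<in>W. card {e\<in>A. w \<in> e}) = (\<Sum>w\<in>W. \<Sum>e\<in>A. if w \<in> e then 1 else 0)"
    using assms(2) by (simp add: sum.inter_filter[symmetric])
  also have "\<dots> = (\<Sum>e\<in>A. \<Sum>w\<in>W. if w \<in> e then 1 else 0)"
    by (rule sum.swap)
  also have "\<dots> = (\<Sum>e\<in>A. card {w\<in>W. w \<in> e})"
    using assms(1) by (simp add: sum.inter_filter[symmetric])
  also have "\<dots> = (\<Sum>e\<in>A. 2)"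
  proof (rule sum.cong)
    fix e assume "e \<in> A"
    with assms(3) have "{w\<in>W. w \<in> e} = e" "card e = 2" by blast+
    then show "card {w\<in>W. w \<in> e} = 2" by simp
  qed simp
  finally show ?thesis by simp
qed

lemma rtranclp_avoiding_start:
  assumes "R\<^sup>*\<^sup>* a x" and "\<And>y. R a y \<Longrightarrow> y = a'" and "a' \<noteq> a"
  shows "x = a \<or> (\<lambda>x y. R x y \<and> x \<noteq> a \<and> y \<noteq> a)\<^sup>*\<^sup>* a' x"
  using assms(1)
proof (induction rule: rtranclp_induct)
  case (step y z)
  consider "z = a" | "y = a" | "y \<noteq> a" "z \<noteq> a" by blast
  then show ?case
  proof cases
    case 2
    with step.hyps(2) assms(2) show ?thesis by simp
  next
    case 3
    with step show ?thesis by (auto intro: rtranclp.rtrancl_into_rtrancl)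
  qed simp
qed simp

text \<open>In a finite graph of maximum degree two every component is a path or a cycle, so a
  component has at most two vertices of degree at most one.\<close>

lemma max_degree_two_component_ends:
  assumes "finite A" "\<And>x y. R x y \<Longrightarrow> x \<in> A \<and> y \<in> A"
    and "\<And>x. \<not> R x x" "\<And>x y. R x y \<Longrightarrow> R y x"
    and "\<And>x y z w. R x y \<Longrightarrow> R x z \<Longrightarrow> R x w \<Longrightarrow> y = z \<or> y = w \<or> z = w"
    and "\<And>y z. R a y \<Longrightarrow> R a z \<Longrightarrow> y = z"
    and "\<And>y z. R b y \<Longrightarrow> R b z \<Longrightarrow> y = z"
    and "\<And>y z. R c y \<Longrightarrow> R c z \<Longrightarrow> y = z"
    and "R\<^sup>*\<^sup>* a b" "R\<^sup>*\<^sup>* a c" "a \<noteq> b" "a \<noteq> c" "b \<noteq> c"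
  shows False
  using assms
proof (induction "card A" arbitrary: A R a rule: less_induct)
  case less
  obtain a' where "R a a'"
    using \<open>R\<^sup>*\<^sup>* a b\<close> \<open>a \<noteq> b\<close> by (cases rule: converse_rtranclpE) auto
  have a'_unique: "\<And>y. R a y \<Longrightarrow> y = a'" using less.prems(6) \<open>R a a'\<close> by blast
  have "a' \<noteq> a" using less.prems(3) \<open>R a a'\<close> by blast
  let ?R = "\<lambda>x y. R x y \<and> x \<noteq> a \<and> y \<noteq> a"
  have "?R\<^sup>*\<^sup>* a' b" "?R\<^sup>*\<^sup>* a' c"
    using rtranclp_avoiding_start[OF _ a'_unique \<open>a' \<noteq> a\<close>] less.prems(9-12) by blast+
  have a'_end: "?R a' y \<Longrightarrow> ?R a' z \<Longrightarrow> y = z" for y z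
    using less.prems(4,5) \<open>R a a'\<close> by metis
  have "a' \<noteq> b"
  proof
    assume "a' = b"
    with \<open>?R\<^sup>*\<^sup>* a' c\<close> \<open>b \<noteq> c\<close> obtain y where "?R b y"
      by (cases rule: converse_rtranclpE) auto
    with less.prems(4,7) \<open>R a a'\<close> \<open>a' = b\<close> show False by blast
  qed
  have "a' \<noteq> c"
  proof
    assume "a' = c"
    with \<open>?R\<^sup>*\<^sup>* a' b\<close> \<open>b \<noteq> c\<close> obtain y where "?R c y"
      by (cases rule: converse_rtranclpE) auto
    with less.prems(4,8) \<open>R a a'\<close> \<open>a' = c\<close> show False by blast
  qed
  have "a \<in> A" using less.prems(2) \<open>R a a'\<close> by blast
  then have "card (A - {a}) < card A" using less.prems(1) by (intro card_Diff1_less)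
  then show False
    by (rule less.hyps[of "A - {a}" ?R a'])
      (use less.prems \<open>a' \<noteq> b\<close> \<open>a' \<noteq> c\<close> \<open>?R\<^sup>*\<^sup>* a' b\<close> \<open>?R\<^sup>*\<^sup>* a' c\<close> a'_end in \<open>blast+\<close>)
qed

section \<open>Maximum edge-coloured subgraphs and Kempe chains\<close>

definition coloured_subgraph :: "'c set \<Rightarrow> 'a set set \<Rightarrow> 'a set set \<Rightarrow> ('a set \<Rightarrow> 'c) \<Rightarrow> bool" where
  "coloured_subgraph C E F c \<longleftrightarrow> F \<subseteq> E \<and> (\<forall>e\<in>F. c e \<in> C) \<and>
     (\<forall>e\<in>F. \<forall>f\<in>F. e \<noteq> f \<and> e \<inter> f \<noteq> {} \<longrightarrow> c e \<noteq> c f)"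

definition has_colour :: "'a set set \<Rightarrow> ('a set \<Rightarrow> 'c) \<Rightarrow> 'a \<Rightarrow> 'c \<Rightarrow> bool" where
  "has_colour F c v j \<longleftrightarrow> (\<exists>e\<in>F. v \<in> e \<and> c e = j)"

definition kempe_adj :: "'a set set \<Rightarrow> ('a set \<Rightarrow> 'c) \<Rightarrow> 'c \<Rightarrow> 'c \<Rightarrow> 'a \<Rightarrow> 'a \<Rightarrow> bool" where
  "kempe_adj F c \<alpha> \<beta> x y \<longleftrightarrow> x \<noteq> y \<and> {x, y} \<in> F \<and> c {x, y} \<in> {\<alpha>, \<beta>}"

lemma kempe_adj_sym: "kempe_adj F c \<alpha> \<beta> x y \<Longrightarrow> kempe_adj F c \<alpha> \<beta> y x"
  unfolding kempe_adj_def by (auto simp: insert_commute)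

lemma coloured_subgraph_colour_unique:
  assumes "coloured_subgraph C E F c" "e \<in> F" "f \<in> F" "v \<in> e" "v \<in> f" "c e = c f"
  shows "e = f"
  using assms unfolding coloured_subgraph_def by blast

lemma coloured_subgraph_insert:
  assumes "coloured_subgraph C E F c" "{x, y} \<in> E" "j \<in> C"
    and "\<not> has_colour F c x j" "\<not> has_colour F c y j"
  shows "coloured_subgraph C E (insert {x, y} F) (c({x, y} := j))"
  using assms unfolding coloured_subgraph_def has_colour_def by (auto 0 3)

lemma kempe_adj_same_colour:
  assumes "coloured_subgraph C E F c" "kempe_adj F c \<alpha> \<beta> x y" "kempe_adj F c \<alpha> \<beta> x z"
    and "c {x, y} = c {x, z}"
  shows "y = z"
proof -
  have "{x, y} = {x, z}"
    using assms coloured_subgraph_colour_unique[of C E F c "{x, y}" "{x, z}" x]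
    unfolding kempe_adj_def by blast
  with assms(2,3) show ?thesis unfolding kempe_adj_def by (auto simp: doubleton_eq_iff)
qed

lemma kempe_adj_max_degree_two:
  assumes "coloured_subgraph C E F c"
    and "kempe_adj F c \<alpha> \<beta> x y" "kempe_adj F c \<alpha> \<beta> x z" "kempe_adj F c \<alpha> \<beta> x w"
  shows "y = z \<or> y = w \<or> z = w"
  using assms kempe_adj_same_colour[OF assms(1)] unfolding kempe_adj_def by (metis insertE singletonD)

lemma kempe_adj_end:
  assumes "coloured_subgraph C E F c" "\<not> has_colour F c x \<gamma>" "\<gamma> \<in> {\<alpha>, \<beta>}"
    and "kempe_adj F c \<alpha> \<beta> x y" "kempe_adj F c \<alpha> \<beta> x z"
  shows "y = z"
proof (rule kempe_adj_same_colour[OF assms(1,4,5)])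
  have "c {x, y} \<noteq> \<gamma>" "c {x, z} \<noteq> \<gamma>"
    using assms(2,4,5) unfolding has_colour_def kempe_adj_def by blast+
  with assms(3-5) show "c {x, y} = c {x, z}" unfolding kempe_adj_def by auto
qed

text \<open>\<open>K\<close> is closed under \<open>\<alpha>\<beta>\<close>-coloured edges, i.e.\ a union of \<open>\<alpha>\<beta>\<close>-chains. As the
  transposition fixes every other colour, it may be applied to all edges meeting \<open>K\<close>.\<close>

lemma coloured_subgraph_swap:
  assumes "coloured_subgraph C E F c" "\<alpha> \<in> C" "\<beta> \<in> C"
    and closed: "\<And>f. f \<in> F \<Longrightarrow> c f \<in> {\<alpha>, \<beta>} \<Longrightarrow> f \<inter> K \<noteq> {} \<Longrightarrow> f \<subseteq> K"
  shows "coloured_subgraph C E F (\<lambda>f. if f \<inter> K \<noteq> {} then transpose \<alpha> \<beta> (c f) else c f)"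
  unfolding coloured_subgraph_def
proof (intro conjI ballI impI)
  show "F \<subseteq> E" "\<And>f. f \<in> F \<Longrightarrow> (if f \<inter> K \<noteq> {} then transpose \<alpha> \<beta> (c f) else c f) \<in> C"
    using assms(1-3) unfolding coloured_subgraph_def transpose_def by auto
next
  fix e f assume ef: "e \<in> F" "f \<in> F" "e \<noteq> f \<and> e \<inter> f \<noteq> {}"
  then have "c e \<noteq> c f" using assms(1) unfolding coloured_subgraph_def by blast
  moreover have "c e \<notin> {\<alpha>, \<beta>}" if "e \<inter> K \<noteq> {}" "f \<inter> K = {}"
    using closed[OF ef(1) _ that(1)] ef(3) that(2) by blast
  moreover have "c f \<notin> {\<alpha>, \<beta>}" if "f \<inter> K \<noteq> {}" "e \<inter> K = {}"
    using closed[OF ef(2) _ that(1)] ef(3) that(2) by blast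
  ultimately show "(if e \<inter> K \<noteq> {} then transpose \<alpha> \<beta> (c e) else c e) \<noteq>
      (if f \<inter> K \<noteq> {} then transpose \<alpha> \<beta> (c f) else c f)"
    by (auto dest: transpose_eq_imp_eq)
qed

lemma kempe_recolouring:
  assumes "simple_graph V E" "coloured_subgraph C E F c" "\<alpha> \<in> C" "\<beta> \<in> C"
    and u: "\<not> has_colour F c u \<alpha>" and b: "\<not> has_colour F c b \<beta>"
    and "\<not> (kempe_adj F c \<alpha> \<beta>)\<^sup>*\<^sup>* u b"
  obtains c' where "coloured_subgraph C E F c'" "\<not> has_colour F c' u \<beta>" "\<not> has_colour F c' b \<beta>"
proof -
  define K where "K = {x. (kempe_adj F c \<alpha> \<beta>)\<^sup>*\<^sup>* u x}"
  have "u \<in> K" "b \<notin> K" using assms(7) unfolding K_def by simp_all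
  have closed: "f \<subseteq> K" if f: "f \<in> F" "c f \<in> {\<alpha>, \<beta>}" "f \<inter> K \<noteq> {}" for f
  proof -
    have "f \<in> E" using f(1) assms(2) unfolding coloured_subgraph_def by blast
    then obtain x y where xy: "f = {x, y}" "x \<noteq> y" by (rule simple_graph_edgeE[OF assms(1)])
    then have "kempe_adj F c \<alpha> \<beta> x y" "kempe_adj F c \<alpha> \<beta> y x"
      using f(1,2) unfolding kempe_adj_def by (auto simp: insert_commute)
    with f(3) xy(1) show ?thesis
      unfolding K_def by (auto intro: rtranclp.rtrancl_into_rtrancl)
  qed
  define c' where "c' f = (if f \<inter> K \<noteq> {} then transpose \<alpha> \<beta> (c f) else c f)" for f
  have "coloured_subgraph C E F c'"
    unfolding c'_def by (rule coloured_subgraph_swap[OF assms(2-4) closed])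
  moreover have "\<not> has_colour F c' u \<beta>"
    using u \<open>u \<in> K\<close> unfolding has_colour_def c'_def by (auto simp: transpose_eq_iff)
  moreover have "\<not> has_colour F c' b \<beta>"
  proof (unfold has_colour_def, rule notI, elim bexE conjE)
    fix f assume "f \<in> F" "b \<in> f" "c' f = \<beta>"
    then have "c f \<notin> {\<alpha>, \<beta>} \<or> f \<inter> K = {}" using closed \<open>b \<notin> K\<close> by blast
    with \<open>c' f = \<beta>\<close> have "c f = \<beta>" unfolding c'_def by (auto split: if_splits)
    with b \<open>f \<in> F\<close> \<open>b \<in> f\<close> show False unfolding has_colour_def by blast
  qed
  ultimately show thesis by (rule that)
qed

definition saturated :: "'a set \<Rightarrow> 'c set \<Rightarrow> 'a set set \<Rightarrow> ('a set \<Rightarrow> 'c) \<Rightarrow> 'a set" where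
  "saturated V C F c = {v\<in>V. \<forall>j\<in>C. has_colour F c v j}"

locale maximum_coloured_subgraph =
  fixes V :: "'a set" and E :: "'a set set" and C :: "'c set"
    and F :: "'a set set" and c :: "'a set \<Rightarrow> 'c"
  assumes simple: "simple_graph V E"
    and coloured: "coloured_subgraph C E F c"
    and maximum: "\<And>F' c'. coloured_subgraph C E F' c' \<Longrightarrow> card F' \<le> card F"
begin

lemma F_subset: "F \<subseteq> E"
  using coloured unfolding coloured_subgraph_def by blast

lemma finite_F: "finite F"
  using finite_subset[OF F_subset simple_graph_finite_edges[OF simple]] .

lemma missing_colour_not_common:
  assumes "coloured_subgraph C E F c'" "{x, y} \<in> E" "{x, y} \<notin> F" "j \<in> C"
  shows "has_colour F c' x j \<or> has_colour F c' y j"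
proof (rule ccontr)
  assume "\<not> ?thesis"
  then have "coloured_subgraph C E (insert {x, y} F) (c'({x, y} := j))"
    using coloured_subgraph_insert[OF assms(1,2,4)] by blast
  from maximum[OF this] show False using assms(3) finite_F by simp
qed

lemma kempe_chain:
  assumes "{u, b} \<in> E" "{u, b} \<notin> F" "\<alpha> \<in> C" "\<beta> \<in> C"
    and "\<not> has_colour F c u \<alpha>" "\<not> has_colour F c b \<beta>"
  shows "(kempe_adj F c \<alpha> \<beta>)\<^sup>*\<^sup>* u b"
proof (rule ccontr)
  assume "\<not> ?thesis"
  with kempe_recolouring[OF simple coloured assms(3-6)] obtain c' where
    "coloured_subgraph C E F c'" "\<not> has_colour F c' u \<beta>" "\<not> has_colour F c' b \<beta>" .
  with missing_colour_not_common[OF _ assms(1,2,4)] show False by blast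
qed

lemma missing_colour_partner_unique:
  assumes "\<alpha> \<in> C" "\<beta> \<in> C" "\<not> has_colour F c u \<alpha>"
    and "{u, b} \<in> E" "{u, b} \<notin> F" "\<not> has_colour F c b \<beta>"
    and "{u, b'} \<in> E" "{u, b'} \<notin> F" "\<not> has_colour F c b' \<beta>"
  shows "b = b'"
proof (rule ccontr)
  assume "b \<noteq> b'"
  \<comment> \<open>\<open>u\<close>, \<open>b\<close>, \<open>b'\<close> are distinct ends of the \<open>\<alpha>\<beta>\<close>-chain through \<open>u\<close>.\<close>
  show False
  proof (rule max_degree_two_component_ends)
    show "finite V" by (rule simple_graph_finite_vertices[OF simple])
    show "kempe_adj F c \<alpha> \<beta> x y \<Longrightarrow> x \<in> V \<and> y \<in> V" for x y
      using F_subset simple_graph_edge_subset[OF simple] unfolding kempe_adj_def by blast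
    show "\<not> kempe_adj F c \<alpha> \<beta> x x" for x unfolding kempe_adj_def by simp
    show "kempe_adj F c \<alpha> \<beta> x y \<Longrightarrow> kempe_adj F c \<alpha> \<beta> y x" for x y by (rule kempe_adj_sym)
    show "kempe_adj F c \<alpha> \<beta> x y \<Longrightarrow> kempe_adj F c \<alpha> \<beta> x z \<Longrightarrow> kempe_adj F c \<alpha> \<beta> x w
        \<Longrightarrow> y = z \<or> y = w \<or> z = w" for x y z w
      by (rule kempe_adj_max_degree_two[OF coloured])
    show "kempe_adj F c \<alpha> \<beta> u y \<Longrightarrow> kempe_adj F c \<alpha> \<beta> u z \<Longrightarrow> y = z" for y z
      by (rule kempe_adj_end[OF coloured assms(3)]) simp_all
    show "kempe_adj F c \<alpha> \<beta> b y \<Longrightarrow> kempe_adj F c \<alpha> \<beta> b z \<Longrightarrow> y = z" for y z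
      by (rule kempe_adj_end[OF coloured assms(6)]) simp_all
    show "kempe_adj F c \<alpha> \<beta> b' y \<Longrightarrow> kempe_adj F c \<alpha> \<beta> b' z \<Longrightarrow> y = z" for y z
      by (rule kempe_adj_end[OF coloured assms(9)]) simp_all
    show "(kempe_adj F c \<alpha> \<beta>)\<^sup>*\<^sup>* u b" "(kempe_adj F c \<alpha> \<beta>)\<^sup>*\<^sup>* u b'"
      using kempe_chain assms by blast+
    show "u \<noteq> b" "u \<noteq> b'"
      using simple_graph_card_edge[OF simple] assms(4,7) by force+
  qed fact
qed

lemma card_colours_le_degree:
  assumes "v \<in> saturated V C F c"
  shows "card C \<le> card {f\<in>F. v \<in> f}"
proof -
  have "C \<subseteq> c ` {f\<in>F. v \<in> f}"
    using assms unfolding saturated_def has_colour_def by (fastforce simp: image_iff)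
  then have "card C \<le> card (c ` {f\<in>F. v \<in> f})"
    using finite_F by (intro card_mono) auto
  also have "\<dots> \<le> card {f\<in>F. v \<in> f}"
    using finite_F by (intro card_image_le) auto
  finally show ?thesis .
qed

text \<open>Each uncoloured edge \<open>{u, b}\<close> between unsaturated vertices is charged to the colour
  \<open>\<beta>\<close> missing at \<open>b\<close>, which must be present at \<open>u\<close>; by the Kempe chain argument distinct
  edges receive distinct colours.\<close>

lemma card_uncoloured_edges_le_degree:
  assumes "u \<in> V" "u \<notin> saturated V C F c"
  shows "card {e\<in>E-F. u \<in> e \<and> e \<inter> saturated V C F c = {}} \<le> card {f\<in>F. u \<in> f}"
proof -
  let ?S = "saturated V C F c"
  define N where "N = {e\<in>E-F. u \<in> e \<and> e \<inter> ?S = {}}"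
  obtain \<alpha> where "\<alpha> \<in> C" "\<not> has_colour F c u \<alpha>"
    using assms unfolding saturated_def by blast
  have "\<forall>e\<in>N. \<exists>b. e = {u, b} \<and> b \<in> V - ?S"
  proof
    fix e assume "e \<in> N"
    then have "e \<in> E" "u \<in> e" "e \<inter> ?S = {}" unfolding N_def by auto
    then obtain x y where "e = {x, y}" "x \<in> V" "y \<in> V"
      by (elim simple_graph_edgeE[OF simple])
    with \<open>u \<in> e\<close> \<open>e \<inter> ?S = {}\<close> show "\<exists>b. e = {u, b} \<and> b \<in> V - ?S"
      by (auto simp: insert_commute)
  qed
  from bchoice[OF this] obtain partner
    where partner: "\<forall>e\<in>N. e = {u, partner e} \<and> partner e \<in> V - ?S" ..
  then have "\<forall>e\<in>N. \<exists>\<beta>. \<beta> \<in> C \<and> \<not> has_colour F c (partner e) \<beta>"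
    unfolding saturated_def by blast
  from bchoice[OF this] obtain \<mu>
    where \<mu>: "\<forall>e\<in>N. \<mu> e \<in> C \<and> \<not> has_colour F c (partner e) (\<mu> e)" ..
  have uncoloured: "{u, partner e} \<in> E" "{u, partner e} \<notin> F" if "e \<in> N" for e
    using that partner unfolding N_def by auto
  have "inj_on \<mu> N"
  proof (rule inj_onI)
    fix e e' assume "e \<in> N" "e' \<in> N" "\<mu> e = \<mu> e'"
    have "partner e = partner e'"
    proof (rule missing_colour_partner_unique)
      show "\<alpha> \<in> C" "\<not> has_colour F c u \<alpha>" by fact+
      show "\<mu> e \<in> C" "\<not> has_colour F c (partner e) (\<mu> e)"
        "\<not> has_colour F c (partner e') (\<mu> e)"
        using \<mu> \<open>e \<in> N\<close> \<open>e' \<in> N\<close> \<open>\<mu> e = \<mu> e'\<close> by auto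
      show "{u, partner e} \<in> E" "{u, partner e} \<notin> F" "{u, partner e'} \<in> E" "{u, partner e'} \<notin> F"
        using uncoloured \<open>e \<in> N\<close> \<open>e' \<in> N\<close> by blast+
    qed
    with \<open>e \<in> N\<close> \<open>e' \<in> N\<close> partner show "e = e'" by metis
  qed
  have "\<mu> ` N \<subseteq> c ` {f\<in>F. u \<in> f}"
  proof
    fix j assume "j \<in> \<mu> ` N"
    then obtain e where "e \<in> N" "j = \<mu> e" by blast
    then have "has_colour F c u j"
      using missing_colour_not_common[OF coloured uncoloured] \<mu> by blast
    then show "j \<in> c ` {f\<in>F. u \<in> f}" unfolding has_colour_def by blast
  qed
  have "card N = card (\<mu> ` N)"
    using \<open>inj_on \<mu> N\<close> by (simp add: card_image)
  also have "\<dots> \<le> card (c ` {f\<in>F. u \<in> f})"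
    using \<open>\<mu> ` N \<subseteq> c ` {f\<in>F. u \<in> f}\<close> finite_F by (intro card_mono) auto
  also have "\<dots> \<le> card {f\<in>F. u \<in> f}"
    using finite_F by (intro card_image_le) auto
  finally show ?thesis unfolding N_def .
qed

lemma saturated_cover_bound:
  "card C * card (saturated V C F c) + card {e\<in>E. e \<inter> saturated V C F c = {}} \<le> 2 * card F"
proof -
  let ?S = "saturated V C F c"
  define deg where "deg v = card {f\<in>F. v \<in> f}" for v
  define A where "A = {e\<in>E. e \<inter> ?S = {}}"
  have fin: "finite V" "finite E" "finite (V - ?S)"
    using simple_graph_finite_vertices[OF simple] simple_graph_finite_edges[OF simple] by auto
  have edge: "e \<subseteq> V \<and> card e = 2" if "e \<in> E" for e
    using that simple_graph_edge_subset[OF simple] simple_graph_card_edge[OF simple] by blast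
  have "2 * card F = (\<Sum>v\<in>V. deg v)"
    unfolding deg_def by (rule handshake[symmetric, OF fin(1) finite_F]) (use edge F_subset in blast)
  also have "\<dots> = (\<Sum>v\<in>?S. deg v) + (\<Sum>v\<in>V - ?S. deg v)"
    using sum.subset_diff[of ?S V deg] fin(1) unfolding saturated_def by auto
  finally have total: "2 * card F = (\<Sum>v\<in>?S. deg v) + (\<Sum>v\<in>V - ?S. deg v)" .
  have "card C * card ?S = (\<Sum>v\<in>?S. card C)" by simp
  also have "\<dots> \<le> (\<Sum>v\<in>?S. deg v)"
    unfolding deg_def by (rule sum_mono) (rule card_colours_le_degree)
  finally have saturated_part: "card C * card ?S \<le> (\<Sum>v\<in>?S. deg v)" .
  have A_edge: "e \<subseteq> V - ?S \<and> card e = 2" if "e \<in> A" for e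
    using that edge unfolding A_def by blast
  have "2 * card (A \<inter> F) = (\<Sum>v\<in>V - ?S. card {e\<in>A \<inter> F. v \<in> e})"
    using handshake[OF fin(3), of "A \<inter> F"] A_edge fin(2) unfolding A_def by auto
  also have "\<dots> \<le> (\<Sum>v\<in>V - ?S. deg v)"
    unfolding deg_def using finite_F by (intro sum_mono card_mono) auto
  finally have coloured_part: "2 * card (A \<inter> F) \<le> (\<Sum>v\<in>V - ?S. deg v)" .
  have "2 * card (A - F) = (\<Sum>v\<in>V - ?S. card {e\<in>A - F. v \<in> e})"
    using handshake[OF fin(3), of "A - F"] A_edge fin(2) unfolding A_def by auto
  also have "\<dots> \<le> (\<Sum>v\<in>V - ?S. deg v)"
  proof (rule sum_mono)
    fix v assume "v \<in> V - ?S"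
    moreover have "{e\<in>A - F. v \<in> e} = {e\<in>E - F. v \<in> e \<and> e \<inter> ?S = {}}"
      unfolding A_def by blast
    ultimately show "card {e\<in>A - F. v \<in> e} \<le> deg v"
      unfolding deg_def using card_uncoloured_edges_le_degree by simp
  qed
  finally have uncoloured_part: "2 * card (A - F) \<le> (\<Sum>v\<in>V - ?S. deg v)" .
  have "card A = card (A \<inter> F) + card (A - F)"
    using fin(2) unfolding A_def by (simp add: card_Int_Diff)
  with total saturated_part coloured_part uncoloured_part show ?thesis
    unfolding A_def by linarith
qed

end

lemma maximum_coloured_subgraph_exists:
  fixes C :: "'c set"
  assumes "simple_graph V E"
  obtains F c where "maximum_coloured_subgraph V E C F c"
proof -
  let ?P = "\<lambda>(F, c :: 'a set \<Rightarrow> 'c). coloured_subgraph C E F c"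
  have "?P ({}, c)" for c unfolding coloured_subgraph_def by simp
  moreover have "\<forall>Fc. ?P Fc \<longrightarrow> (card \<circ> fst) Fc < Suc (card E)"
    using simple_graph_finite_edges[OF assms] card_mono
    unfolding coloured_subgraph_def by fastforce
  ultimately obtain Fc where "?P Fc" "\<forall>Fc'. ?P Fc' \<longrightarrow> (card \<circ> fst) Fc' \<le> (card \<circ> fst) Fc"
    using Lattices_Big.ex_has_greatest_nat by metis
  then show thesis
    using that[of "fst Fc" "snd Fc"] assms
    unfolding maximum_coloured_subgraph_def by (cases Fc) auto
qed

lemma exists_coloured_subgraph_covering:
  fixes C :: "'c set"
  assumes "simple_graph V E"
  obtains F c X where "coloured_subgraph C E F c" "X \<subseteq> V"
    "card C * card X + card {e\<in>E. e \<inter> X = {}} \<le> 2 * card F"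
proof -
  obtain F c where "maximum_coloured_subgraph V E C F c"
    using maximum_coloured_subgraph_exists[OF assms] .
  then interpret maximum_coloured_subgraph V E C F c .
  show thesis
    by (rule that[OF coloured _ saturated_cover_bound]) (auto simp: saturated_def)
qed

section \<open>Triangles of the join with an independent set\<close>

lemma tri_edges_three:
  assumes "x \<noteq> y" "y \<noteq> z" "x \<noteq> z"
  shows "tri_edges {x, y, z} = {{x, y}, {x, z}, {y, z}}"
proof
  show "tri_edges {x, y, z} \<subseteq> {{x, y}, {x, z}, {y, z}}"
  proof
    fix e assume "e \<in> tri_edges {x, y, z}"
    then obtain p q where "e = {p, q}" "p \<noteq> q" "p \<in> {x, y, z}" "q \<in> {x, y, z}"
      unfolding tri_edges_def card_2_iff by blast
    then show "e \<in> {{x, y}, {x, z}, {y, z}}"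
      by (elim insertE emptyE) (simp_all add: insert_commute)
  qed
  show "{{x, y}, {x, z}, {y, z}} \<subseteq> tri_edges {x, y, z}"
    unfolding tri_edges_def using assms by simp
qed

lemma mem_triangles_iff:
  "t \<in> triangles E \<longleftrightarrow> (\<exists>x y z. t = {x, y, z} \<and> x \<noteq> y \<and> y \<noteq> z \<and> x \<noteq> z \<and>
     {x, y} \<in> E \<and> {x, z} \<in> E \<and> {y, z} \<in> E)" (is "_ \<longleftrightarrow> ?rhs")
proof
  assume "t \<in> triangles E"
  then obtain x y z where "t = {x, y, z}" "x \<noteq> y" "y \<noteq> z" "x \<noteq> z" "tri_edges t \<subseteq> E"
    unfolding triangles_def card_3_iff by blast
  moreover from this have "tri_edges t = {{x, y}, {x, z}, {y, z}}"
    by (simp add: tri_edges_three)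
  ultimately show ?rhs by auto
next
  assume ?rhs
  then obtain x y z where "t = {x, y, z}" "x \<noteq> y" "y \<noteq> z" "x \<noteq> z"
    "{x, y} \<in> E" "{x, z} \<in> E" "{y, z} \<in> E" by blast
  then show "t \<in> triangles E"
    unfolding triangles_def by (simp add: tri_edges_three)
qed

lemma triangles_mono: "E \<subseteq> E' \<Longrightarrow> triangles E \<subseteq> triangles E'"
  unfolding triangles_def by blast

lemma tau_le_card:
  assumes "X \<subseteq> E" "triangle_free (E - X)"
  shows "tau E \<le> card X"
  unfolding tau_def by (rule Least_le) (use assms in blast)

lemma card_le_nu:
  assumes "finite (triangles E)" "edge_disjoint_triangles E T"
  shows "card T \<le> nu E"
proof -
  have "{card T | T. edge_disjoint_triangles E T} \<subseteq> card ` Pow (triangles E)"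
    unfolding edge_disjoint_triangles_def by blast
  then have "finite {card T | T. edge_disjoint_triangles E T}"
    using assms(1) finite_subset by blast
  with assms(2) show ?thesis unfolding nu_def by (auto intro: Max_ge)
qed

lemma image_mem_image_image_iff: "inj f \<Longrightarrow> f ` A \<in> image f ` S \<longleftrightarrow> A \<in> S"
  by (auto simp: inj_image_eq_iff)

lemma Inl_Inl_in_join_edges: "{Inl i, Inl j} \<in> join_edges V1 E1 V2 E2 \<longleftrightarrow> {i, j} \<in> E1"
proof -
  have A: "{Inl i, Inl j} \<in> image Inl ` E1 \<longleftrightarrow> {i, j} \<in> E1"
    using image_mem_image_image_iff[of Inl "{i, j}" E1] by simp
  have B: "{Inl i, Inl j} \<notin> image Inr ` E2" by auto
  have C: "{Inl i, Inl j} \<notin> {{Inl u, Inr v} | u v. u \<in> V1 \<and> v \<in> V2}"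
    by (auto simp: doubleton_eq_iff)
  show ?thesis by (simp only: join_edges_def Un_iff A B C simp_thms)
qed

lemma Inr_Inr_in_join_edges: "{Inr u, Inr v} \<in> join_edges V1 E1 V2 E2 \<longleftrightarrow> {u, v} \<in> E2"
proof -
  have A: "{Inr u, Inr v} \<in> image Inr ` E2 \<longleftrightarrow> {u, v} \<in> E2"
    using image_mem_image_image_iff[of Inr "{u, v}" E2] by simp
  have B: "{Inr u, Inr v} \<notin> image Inl ` E1" by auto
  have C: "{Inr u, Inr v} \<notin> {{Inl i, Inr w} | i w. i \<in> V1 \<and> w \<in> V2}"
    by (auto simp: doubleton_eq_iff)
  show ?thesis by (simp only: join_edges_def Un_iff A B C simp_thms)
qed

lemma Inl_Inr_in_join_edges: "{Inl i, Inr v} \<in> join_edges V1 E1 V2 E2 \<longleftrightarrow> i \<in> V1 \<and> v \<in> V2"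
proof -
  have "{Inl i, Inr v} \<notin> image Inl ` E1" "{Inl i, Inr v} \<notin> image Inr ` E2" by auto
  moreover have "{Inl i, Inr v} = {Inl i', Inr v'} \<longleftrightarrow> i = i' \<and> v = v'" for i' v'
    by (simp add: doubleton_eq_iff)
  ultimately show ?thesis unfolding join_edges_def Un_iff by simp
qed

lemmas join_edges_simps = Inl_Inl_in_join_edges Inr_Inr_in_join_edges Inl_Inr_in_join_edges

lemma join_triangle_apex:
  assumes "{Inl i, y} \<in> join_edges I {} V E" "{Inl i, z} \<in> join_edges I {} V E"
    and "{y, z} \<in> join_edges I {} V E"
  shows "\<exists>u v. y = Inr u \<and> z = Inr v \<and> i \<in> I \<and> {u, v} \<in> E"
  using assms by (cases y; cases z) (auto simp: join_edges_simps)

lemma triangles_join_independent: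
  assumes "simple_graph V E" "triangle_free E"
  shows "triangles (join_edges I {} V E) = {{Inl i, Inr u, Inr v} | i u v. i \<in> I \<and> {u, v} \<in> E}"
    (is "triangles ?G = ?T")
proof
  show "triangles ?G \<subseteq> ?T"
  proof
    fix t assume "t \<in> triangles ?G"
    then obtain x y z where t: "t = {x, y, z}" "x \<noteq> y" "y \<noteq> z" "x \<noteq> z"
      and edges: "{x, y} \<in> ?G" "{x, z} \<in> ?G" "{y, z} \<in> ?G"
      unfolding mem_triangles_iff by blast
    consider (x) i where "x = Inl i" | (y) i where "y = Inl i" | (z) i where "z = Inl i"
      | (none) a b d where "x = Inr a" "y = Inr b" "z = Inr d"
      by (cases x; cases y; cases z) auto
    then show "t \<in> ?T"
    proof cases
      case x
      with edges obtain u v where "y = Inr u" "z = Inr v" "i \<in> I" "{u, v} \<in> E"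
        using join_triangle_apex[of i y I V E z] by blast
      with t(1) x show ?thesis by blast
    next
      case y
      with edges have "{Inl i, x} \<in> ?G" "{Inl i, z} \<in> ?G" "{x, z} \<in> ?G"
        by (simp_all add: insert_commute)
      then obtain u v where "x = Inr u" "z = Inr v" "i \<in> I" "{u, v} \<in> E"
        using join_triangle_apex[of i x I V E z] by blast
      moreover from this t(1) y have "t = {Inl i, Inr u, Inr v}" by (simp add: insert_commute)
      ultimately show ?thesis by blast
    next
      case z
      with edges have "{Inl i, x} \<in> ?G" "{Inl i, y} \<in> ?G" "{x, y} \<in> ?G"
        by (simp_all add: insert_commute)
      then obtain u v where "x = Inr u" "y = Inr v" "i \<in> I" "{u, v} \<in> E"
        using join_triangle_apex[of i x I V E y] by blast
      moreover from this t(1) z have "t = {Inl i, Inr u, Inr v}" by (simp add: insert_commute)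
      ultimately show ?thesis by blast
    next
      case none
      with edges t(2-4) have "a \<noteq> b" "b \<noteq> d" "a \<noteq> d" "{a, b} \<in> E" "{a, d} \<in> E" "{b, d} \<in> E"
        by (simp_all add: join_edges_simps)
      then have "{a, b, d} \<in> triangles E" unfolding mem_triangles_iff by blast
      with assms(2) show ?thesis unfolding triangle_free_def by simp
    qed
  qed
next
  show "?T \<subseteq> triangles ?G"
  proof
    fix t assume "t \<in> ?T"
    then obtain i u v where t: "t = {Inl i, Inr u, Inr v}" "i \<in> I" "{u, v} \<in> E" by blast
    have "u \<noteq> v" using simple_graph_card_edge[OF assms(1) t(3)] by (cases "u = v") simp_all
    moreover have "u \<in> V" "v \<in> V" using simple_graph_edge_subset[OF assms(1) t(3)] by simp_all
    ultimately have "{Inl i, Inr u} \<in> ?G" "{Inl i, Inr v} \<in> ?G" "{Inr u, Inr v} \<in> ?G"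
      using t(2,3) by (simp_all add: join_edges_simps)
    with \<open>u \<noteq> v\<close> show "t \<in> triangles ?G" unfolding t(1) mem_triangles_iff by blast
  qed
qed

lemma finite_triangles_join:
  assumes "simple_graph V E" "triangle_free E" "finite I"
  shows "finite (triangles (join_edges I {} V E))"
proof (rule finite_subset)
  show "triangles (join_edges I {} V E) \<subseteq> Pow (Inl ` I \<union> Inr ` V)"
    unfolding triangles_join_independent[OF assms(1,2)]
    using simple_graph_edge_subset[OF assms(1)] by blast
  show "finite (Pow (Inl ` I \<union> Inr ` V))"
    using assms(3) simple_graph_finite_vertices[OF assms(1)] by simp
qed

lemma tau_join_le:
  fixes I :: "'i set" and V :: "'a set"
  assumes "simple_graph V E" "triangle_free E" "finite I" "X \<subseteq> V"
  shows "tau (join_edges I {} V E) \<le> card I * card X + card {e\<in>E. e \<inter> X = {}}"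
proof -
  let ?G = "join_edges I {} V E"
  define D1 :: "('i + 'a) set set" where "D1 = (\<lambda>(i, x). {Inl i, Inr x}) ` (I \<times> X)"
  define D2 :: "('i + 'a) set set" where "D2 = image Inr ` {e\<in>E. e \<inter> X = {}}"
  have "D1 \<subseteq> ?G"
    unfolding D1_def using assms(4) by (auto simp: join_edges_simps)
  moreover have "D2 \<subseteq> ?G"
    unfolding D2_def join_edges_def by blast
  moreover have "triangle_free (?G - (D1 \<union> D2))"
    unfolding triangle_free_def
  proof (rule equals0I)
    fix t assume t: "t \<in> triangles (?G - (D1 \<union> D2))"
    then have "t \<in> triangles ?G" using triangles_mono[of "?G - (D1 \<union> D2)" ?G] by blast
    then obtain i u v where tiuv: "t = {Inl i, Inr u, Inr v}" "i \<in> I" "{u, v} \<in> E"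
      unfolding triangles_join_independent[OF assms(1,2)] by blast
    have "u \<noteq> v" using simple_graph_card_edge[OF assms(1) tiuv(3)] by (cases "u = v") simp_all
    with t tiuv(1) have "{Inl i, Inr u} \<notin> D1" "{Inl i, Inr v} \<notin> D1" "{Inr u, Inr v} \<notin> D2"
      unfolding triangles_def by (auto simp: tri_edges_three)
    moreover have "{Inr u, Inr v} = Inr ` {u, v}" by simp
    ultimately show False
      using tiuv(2,3) unfolding D1_def D2_def by blast
  qed
  ultimately have "tau ?G \<le> card (D1 \<union> D2)" by (intro tau_le_card) auto
  also have "\<dots> \<le> card D1 + card D2" by (rule card_Un_le)
  also have "card D1 \<le> card I * card X"
    unfolding D1_def using card_image_le[of "I \<times> X"] assms(3,4)
      finite_subset[OF assms(4) simple_graph_finite_vertices[OF assms(1)]]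
    by (simp add: card_cartesian_product)
  also have "card D2 \<le> card {e\<in>E. e \<inter> X = {}}"
    unfolding D2_def using simple_graph_finite_edges[OF assms(1)] by (intro card_image_le) simp
  finally show ?thesis by simp
qed

text \<open>Each coloured edge \<open>e\<close> spans a triangle with the vertex \<open>c e\<close> of \<open>I\<close>; a shared edge
  \<open>{c e, w}\<close> of two such triangles would give two edges of the same colour at \<open>w\<close>.\<close>

lemma card_le_nu_join:
  fixes I :: "'i set" and V :: "'a set"
  assumes "simple_graph V E" "triangle_free E" "finite I" "coloured_subgraph I E F c"
  shows "card F \<le> nu (join_edges I {} V E)"
proof -
  let ?G = "join_edges I {} V E"
  define apex :: "'a set \<Rightarrow> ('i + 'a) set" where "apex e = insert (Inl (c e)) (Inr ` e)" for e
  have F: "F \<subseteq> E" "\<And>e. e \<in> F \<Longrightarrow> c e \<in> I"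
    using assms(4) unfolding coloured_subgraph_def by blast+
  have pair: "\<exists>a b. e = {a, b} \<and> a \<noteq> b" if "e \<in> F" for e
    using simple_graph_edgeE[OF assms(1)] that F(1) by blast
  have "apex e \<in> triangles ?G" if e: "e \<in> F" for e
  proof -
    obtain a b where "e = {a, b}" using pair[OF e] by blast
    then show ?thesis
      unfolding triangles_join_independent[OF assms(1,2)] apex_def
      using e F by blast
  qed
  moreover have tri_edges_apex: "tri_edges (apex e) = insert (Inr ` e) ((\<lambda>w. {Inl (c e), Inr w}) ` e)"
    if e: "e \<in> F" for e
  proof -
    obtain a b where "e = {a, b}" "a \<noteq> b" using pair[OF e] by blast
    then show ?thesis unfolding apex_def by (simp add: tri_edges_three insert_commute)
  qed
  have "tri_edges (apex e) \<inter> tri_edges (apex f) = {}" if "e \<in> F" "f \<in> F" "e \<noteq> f" for e f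
  proof -
    have "c e \<noteq> c f \<or> e \<inter> f = {}"
      using coloured_subgraph_colour_unique[OF assms(4) that(1,2)] that(3) by blast
    then show ?thesis
      unfolding tri_edges_apex[OF that(1)] tri_edges_apex[OF that(2)]
      using that(3) by (auto simp: doubleton_eq_iff inj_image_eq_iff)
  qed
  ultimately have "edge_disjoint_triangles ?G (apex ` F)"
    unfolding edge_disjoint_triangles_def by blast
  moreover have "inj_on apex F"
  proof (rule inj_onI)
    fix e f assume "apex e = apex f"
    then have "Inr -` apex e = Inr -` apex f" by simp
    then show "e = f" unfolding apex_def by auto
  qed
  ultimately show ?thesis
    using card_le_nu[OF finite_triangles_join[OF assms(1-3)]] card_image by metis
qed

theorem mainTheorem9:
  fixes V :: "'a set" and E :: "'a set set" and k :: nat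
  assumes "simple_graph V E"
    and "triangle_free E"
    and "k \<ge> 1"
  shows "tau (join_edges (indep_vertices k) {} V E)
         \<le> 2 * nu (join_edges (indep_vertices k) {} V E)"
proof -
  \<comment> \<open>The bound also holds for \<open>k = 0\<close>.\<close>
  let ?I = "indep_vertices k"
  let ?G = "join_edges ?I {} V E"
  have "finite ?I" unfolding indep_vertices_def by simp
  obtain F c X where F: "coloured_subgraph ?I E F c" and "X \<subseteq> V"
    and bound: "card ?I * card X + card {e\<in>E. e \<inter> X = {}} \<le> 2 * card F"
    using exists_coloured_subgraph_covering[OF assms(1)] by blast
  have "tau ?G \<le> card ?I * card X + card {e\<in>E. e \<inter> X = {}}"
    by (rule tau_join_le[OF assms(1,2) \<open>finite ?I\<close> \<open>X \<subseteq> V\<close>])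
  also have "\<dots> \<le> 2 * card F" by (rule bound)
  also have "\<dots> \<le> 2 * nu ?G"
    using card_le_nu_join[OF assms(1,2) \<open>finite ?I\<close> F] by simp
  finally show ?thesis .
qed

end
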